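(* Let $\mathcal{X}\subset\mathbb{R}^d$ be compact, let $k\colon\mathcal{X}\times\mathcal{X}\to\mathbb{R}$ be a covariance kernel with RKHS $H_k$ (norm $\|\cdot\|_k$), and let $F\sim\mathcal{N}(0,C)$ be a Gaussian random element in $E=C(\mathcal{X},\mathbb{R})$ whose covariance operator $C\colon R(\mathcal{X})\to C(\mathcal{X},\mathbb{R})$ is $C\nu(\cdot)=\int_{\mathcal{X}}k(\cdot,x')\,d\nu(x')$. Suppose data $y=(y_1,\dots,y_N)$ are noisy point evaluations $Y_n=F(x_n)+\epsilon_n$ at points $x_1,\dots,x_N\in\mathcal{X}$, with $\epsilon_n\sim\mathcal{N}(0,\sigma^2)$ i.i.d. and independent of $F$. Let $\mu_1,\dots,\mu_M\in R(\mathcal{X})$ be the features $L_m=\mu_m$ used in the variational approximation (with $C_{LL}$ invertible), and let $m_{Q^*}$ be the mean of the optimal variational measure $Q^*$, i.e. the function $$m_{Q^*}(x)=C_{xL}\big(\sigma^2C_{LL}+C_{LD}C_{DL}\big)^{-1}C_{LD}\,y,\qquad x\in\mathcal{X}.$$ Let $\mathcal{M}=\mathrm{span}\{C\mu_1,\dots,C\mu_M\}$ (where $C\mu_m=\int_{\mathcal{X}}k(\cdot,x')\,d\mu_m(x')$) and let $$\widehat f=\underset{f\in\mathcal{M}}{\arg\min}\ \frac1N\sum_{n=1}^N\big(f(x_n)-y_n\big)^2+\lambda\|f\|_k^2,\qquad \lambda>0,$$ be the Nyström kernel ridge regression estimator over $\mathcal{M}$. If $\sigma^2=N\lambda$, then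 $\widehat f=m_{Q^*}$.
   Context: $R(\mathcal{X})$ denotes the space of finite regular signed Borel measures on $\mathcal{X}$, identified with the dual of $C(\mathcal{X},\mathbb{R})$ via $f\mapsto\int f\,d\mu$; pointwise evaluation at $x$ corresponds to the Dirac measure $\delta_x$. A Gaussian random element $F$ in $E$ with mean $0$ and covariance operator $C$ means $(F,\mu)_E=\int F\,d\mu$ is a centred Gaussian random variable for every $\mu\in R(\mathcal{X})$, with $\mathrm{Cov}[(F,\mu)_E,(F,\nu)_E]=(C\mu,\nu)_E=\int\int k(x,x')\,d\mu(x')\,d\nu(x)$. Matrices: $(C_{LL})_{mm'}=\int\int k(x,x')\,d\mu_m(x)\,d\mu_{m'}(x')$; $(C_{LD})_{mn}=\int k(x',x_n)\,d\mu_m(x')$, $C_{DL}=C_{LD}^\top$; $(C_{xL})_m=\int k(x,x')\,d\mu_m(x')$. The optimal variational measure $Q^*$ is the maximiser, over $\mu\in\mathbb{R}^M$ and positive definite $\Sigma$, of the evidence lower bound for the variational family $Q(A)=\int_A\frac{dQ^L}{dP^L}\big((f,\mu_1)_E,\dots,(f,\mu_M)_E\big)\,dP(f)$, where $P$ is the law of $F$, $P^L=\mathcal{N}(0,C_{LL})$ is the prior law of the features and $Q^L=\mathcal{N}(\mu,\Sigma)$. *)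

theory Defs
  imports "HOL-Analysis.Analysis"
begin

(* A finite signed Borel measure on X, represented by its Jordan decomposition
   mu = mu_plus - mu_minus with two finite (nonnegative) Borel measures concentrated on X.
   On a compact subset of R^d every finite Borel measure is regular. *)
type_synonym 'a smeasure = "'a measure \<times> 'a measure"

definition signed_borel_on :: "'a::euclidean_space set \<Rightarrow> 'a smeasure \<Rightarrow> bool" where
  "signed_borel_on X \<mu> \<longleftrightarrow>
     (\<forall>M \<in> {fst \<mu>, snd \<mu>}. sets M = sets borel \<and> finite_measure M \<and> emeasure M (- X) = 0)"

definition sint :: "'a smeasure \<Rightarrow> ('a \<Rightarrow> real) \<Rightarrow> real" where
  "sint \<mu> f = (\<integral>x. f x \<partial>(fst \<mu>)) - (\<integral>x. f x \<partial>(snd \<mu>))"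

definition cov_kernel :: "'a::euclidean_space set \<Rightarrow> ('a \<Rightarrow> 'a \<Rightarrow> real) \<Rightarrow> bool" where
  "cov_kernel X k \<longleftrightarrow>
     continuous_on (X \<times> X) (\<lambda>(x, x'). k x x') \<and>
     (\<forall>x\<in>X. \<forall>x'\<in>X. k x x' = k x' x) \<and>
     (\<forall>n (z::nat \<Rightarrow> 'a) (c::nat \<Rightarrow> real). (\<forall>i<n. z i \<in> X) \<longrightarrow>
        0 \<le> (\<Sum>i<n. \<Sum>j<n. c i * c j * k (z i) (z j)))"

(* squared RKHS norm ||f||_k^2 of (the restriction to X of) f, in [0, infinity];
   it is +infinity iff f|X is not in H_k.  Standard characterisation:
   ||f||_k^2 = sup { (sum_i c_i f(z_i))^2 : z_i in X, sum_ij c_i c_j k(z_i,z_j) <= 1 }. *)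
definition rkhs_norm_sq :: "'a set \<Rightarrow> ('a \<Rightarrow> 'a \<Rightarrow> real) \<Rightarrow> ('a \<Rightarrow> real) \<Rightarrow> ereal" where
  "rkhs_norm_sq X k f =
     Sup {ereal ((\<Sum>i<n. c i * f (z i))\<^sup>2) | n (z::nat \<Rightarrow> 'a) (c::nat \<Rightarrow> real).
            (\<forall>i<n. z i \<in> X) \<and> (\<Sum>i<n. \<Sum>j<n. c i * c j * k (z i) (z j)) \<le> 1}"

definition cov_op :: "'a set \<Rightarrow> ('a \<Rightarrow> 'a \<Rightarrow> real) \<Rightarrow> 'a smeasure \<Rightarrow> 'a \<Rightarrow> real" where
  "cov_op X k \<mu> x = sint \<mu> (\<lambda>x'. indicator X x' * k x x')"

definition C_LL :: "'a set \<Rightarrow> ('a \<Rightarrow> 'a \<Rightarrow> real) \<Rightarrow> ('m \<Rightarrow> 'a smeasure) \<Rightarrow> real^'m^'m" where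
  "C_LL X k \<mu> = (\<chi> m m'. sint (\<mu> m) (\<lambda>x. indicator X x * cov_op X k (\<mu> m') x))"

definition C_LD :: "'a set \<Rightarrow> ('a \<Rightarrow> 'a \<Rightarrow> real) \<Rightarrow> ('m \<Rightarrow> 'a smeasure) \<Rightarrow> ('n \<Rightarrow> 'a) \<Rightarrow> real^'n^'m" where
  "C_LD X k \<mu> xs = (\<chi> m n. sint (\<mu> m) (\<lambda>x'. indicator X x' * k x' (xs n)))"

definition C_xL :: "'a set \<Rightarrow> ('a \<Rightarrow> 'a \<Rightarrow> real) \<Rightarrow> ('m \<Rightarrow> 'a smeasure) \<Rightarrow> 'a \<Rightarrow> real^'m" where
  "C_xL X k \<mu> x = (\<chi> m. cov_op X k (\<mu> m) x)"

definition mean_Qstar :: "'a set \<Rightarrow> ('a \<Rightarrow> 'a \<Rightarrow> real) \<Rightarrow> ('m::finite \<Rightarrow> 'a smeasure)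
    \<Rightarrow> ('n::finite \<Rightarrow> 'a) \<Rightarrow> real^'n \<Rightarrow> real \<Rightarrow> 'a \<Rightarrow> real" where
  "mean_Qstar X k \<mu> xs y \<sigma>2 x =
     C_xL X k \<mu> x \<bullet>
       (matrix_inv (\<sigma>2 *\<^sub>R C_LL X k \<mu> + C_LD X k \<mu> xs ** transpose (C_LD X k \<mu> xs))
          *v (C_LD X k \<mu> xs *v y))"

definition nystrom_space :: "'a set \<Rightarrow> ('a \<Rightarrow> 'a \<Rightarrow> real) \<Rightarrow> ('m::finite \<Rightarrow> 'a smeasure) \<Rightarrow> ('a \<Rightarrow> real) set" where
  "nystrom_space X k \<mu> = {(\<lambda>x. \<Sum>m\<in>UNIV. a m * cov_op X k (\<mu> m) x) | a. True}"

definition krr_objective :: "'a set \<Rightarrow> ('a \<Rightarrow> 'a \<Rightarrow> real) \<Rightarrow> ('n::finite \<Rightarrow> 'a) \<Rightarrow> real^'n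
    \<Rightarrow> real \<Rightarrow> ('a \<Rightarrow> real) \<Rightarrow> ereal" where
  "krr_objective X k xs y lam f =
     ereal ((1 / real CARD('n)) * (\<Sum>n\<in>UNIV. (f (xs n) - y $ n)\<^sup>2)) + ereal lam * rkhs_norm_sq X k f"

definition is_argmin_on :: "('b \<Rightarrow> ereal) \<Rightarrow> 'b set \<Rightarrow> 'b \<Rightarrow> bool" where
  "is_argmin_on J S f \<longleftrightarrow> f \<in> S \<and> (\<forall>g\<in>S. J f \<le> J g)"

end

theory Submission
  imports Defs
begin

(*
  Every element of the Nystrom space is f_v = C nu_v for the signed measure nu_v = sum_m v_m mu_m.
  Two identities reduce the problem to finite dimensions: f_v(x_n) = (C_DL v)_n and
  ||f_v||_k^2 = v' C_LL v. The second, like the symmetry and positive semidefiniteness of C_LL,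
  is obtained by discretising the measures on finer and finer Borel partitions of X: the double
  integrals become Gram sums sum_jl w_j w_l k(z_j, z_l), for which symmetry, positivity and the
  supremum characterisation of the RKHS norm are immediate. The regularised risk of f_v is then
  the quadratic (1/N) |C_DL v - y|^2 + lam v' C_LL v. As sigma^2 = N lam, a solution of the
  normal equations (sigma^2 C_LL + C_LD C_DL) v = C_LD y, such as the one defining m_Q*, is a
  minimiser, and another minimiser differs from it by some d with d' C_LL d = ||f_d||_k^2 = 0,
  so the two agree on X.
*)

lemma sum_lessThan_add: "(\<Sum>i<n + (m::nat). f i) = (\<Sum>i<n. f i) + (\<Sum>i<m. f (n + i))"
  by (induction m) (simp_all add: add_ac)

lemma square_le_of_quadratic_nonneg:
  fixes a b c :: real
  assumes "0 \<le> c" and nonneg: "\<And>t. 0 \<le> a + 2 * t * b + t\<^sup>2 * c"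
  shows "b\<^sup>2 \<le> a * c"
proof (cases "c = 0")
  case True
  have "b = 0"
  proof (rule ccontr)
    assume "b \<noteq> 0"
    then have "a + 2 * (- (\<bar>a\<bar> + 1) / (2 * b)) * b + (- (\<bar>a\<bar> + 1) / (2 * b))\<^sup>2 * c
        = a - (\<bar>a\<bar> + 1)"
      using True by simp
    then show False
      using nonneg[of "- (\<bar>a\<bar> + 1) / (2 * b)"] by linarith
  qed
  with True show ?thesis
    by simp
next
  case False
  with \<open>0 \<le> c\<close> have "c > 0"
    by simp
  have "0 \<le> a + 2 * (- b / c) * b + (- b / c)\<^sup>2 * c"
    by (rule nonneg)
  also have "\<dots> = a - b\<^sup>2 / c"
    using \<open>c > 0\<close> by (simp add: field_simps power2_eq_square)
  finally show ?thesis
    using \<open>c > 0\<close> by (simp add: field_simps)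
qed

lemma LIMSEQ_of_abs_diff_le:
  fixes x :: "nat \<Rightarrow> real"
  assumes "\<And>n. \<bar>x n - L\<bar> \<le> K / real (Suc n)"
  shows "x \<longlonglongrightarrow> L"
proof -
  have "(\<lambda>n. x n - L) \<longlonglongrightarrow> 0"
  proof (rule Lim_null_comparison)
    show "\<forall>\<^sub>F n in sequentially. norm (x n - L) \<le> K / real (Suc n)"
      using assms by (intro always_eventually allI) (simp only: real_norm_def)
    show "(\<lambda>n. K / real (Suc n)) \<longlonglongrightarrow> 0"
      by (rule LIMSEQ_Suc[OF lim_const_over_n])
  qed
  then show ?thesis
    by (rule LIM_zero_cancel)
qed

lemma inner_transpose_mult: "(u::real^'n) \<bullet> (transpose A *v d) = d \<bullet> (A *v u)"
  by (metis dot_lmul_matrix inner_commute transpose_matrix_vector)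

lemma matrix_inv_right: "invertible A \<Longrightarrow> A ** matrix_inv A = mat 1"
  unfolding invertible_def matrix_inv_def by (metis (mono_tags, lifting) someI_ex)

lemma psd_form_eq_0_imp_mult_eq_0:
  fixes C :: "real^'n^'n"
  assumes sym: "\<And>u w. u \<bullet> (C *v w) = w \<bullet> (C *v u)" and psd: "\<And>w. 0 \<le> w \<bullet> (C *v w)"
    and "v \<bullet> (C *v v) = 0"
  shows "C *v v = 0"
proof -
  define w where "w = C *v v"
  have "(v + t *\<^sub>R w) \<bullet> (C *v (v + t *\<^sub>R w)) = 0 + 2 * t * (w \<bullet> w) + t\<^sup>2 * (w \<bullet> (C *v w))" for t
    using assms(3) sym[of v w]
    by (simp add: w_def algebra_simps inner_add_left inner_add_right power2_eq_square)
  then have "(w \<bullet> w)\<^sup>2 \<le> 0 * (w \<bullet> (C *v w))"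
    using psd by (intro square_le_of_quadratic_nonneg) metis+
  then show ?thesis
    by (simp add: w_def)
qed

lemma invertible_psd_add_gram:
  fixes C :: "real^'m^'m" and B :: "real^'n^'m"
  assumes "invertible C" and sym: "\<And>u w. u \<bullet> (C *v w) = w \<bullet> (C *v u)"
    and psd: "\<And>w. 0 \<le> w \<bullet> (C *v w)" and "s > 0"
  shows "invertible (s *\<^sub>R C + B ** transpose B)"
  unfolding invertible_left_inverse matrix_left_invertible_ker
proof (intro allI impI)
  fix v assume "(s *\<^sub>R C + B ** transpose B) *v v = 0"
  then have "0 = v \<bullet> ((s *\<^sub>R C + B ** transpose B) *v v)"
    by simp
  also have "\<dots> = s * (v \<bullet> (C *v v)) + (transpose B *v v) \<bullet> (transpose B *v v)"
    using inner_transpose_mult[of "transpose B *v v" B v]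
    by (simp del: transpose_matrix_vector add: matrix_vector_mult_add_rdistrib inner_add_right
        scaleR_matrix_vector_assoc[symmetric] matrix_vector_mul_assoc[symmetric])
  finally have "0 = s * (v \<bullet> (C *v v)) + (transpose B *v v) \<bullet> (transpose B *v v)" .
  moreover have "0 \<le> s * (v \<bullet> (C *v v))"
    using psd[of v] \<open>s > 0\<close> by simp
  ultimately have "s * (v \<bullet> (C *v v)) = 0"
    using inner_ge_zero[of "transpose B *v v"] by linarith
  then have "v \<bullet> (C *v v) = 0"
    using \<open>s > 0\<close> by simp
  then have "C *v v = C *v 0"
    using psd_form_eq_0_imp_mult_eq_0[OF sym psd] by simp
  then show "v = 0"
    using inj_matrix_vector_mult[OF \<open>invertible C\<close>] by (meson injD)
qed

lemma quadratic_objective_expansion: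
  fixes C :: "real^'m^'m" and B :: "real^'n^'m"
  assumes sym: "\<And>u w. u \<bullet> (C *v w) = w \<bullet> (C *v u)"
    and normal: "(s *\<^sub>R C + B ** transpose B) *v v = B *v y"
  shows "(norm (transpose B *v (v + d) - y))\<^sup>2 + s * ((v + d) \<bullet> (C *v (v + d)))
       = (norm (transpose B *v v - y))\<^sup>2 + s * (v \<bullet> (C *v v))
         + (norm (transpose B *v d))\<^sup>2 + s * (d \<bullet> (C *v d))"
proof -
  define r where "r = transpose B *v v - y"
  \<comment> \<open>the normal equations say that the cross terms of the two summands cancel\<close>
  have "B *v r = (B ** transpose B) *v v - (s *\<^sub>R C + B ** transpose B) *v v"
    by (simp only: r_def matrix_vector_mult_diff_distrib matrix_vector_mul_assoc normal[symmetric])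
  also have "\<dots> = - (s *\<^sub>R (C *v v))"
    by (simp add: matrix_vector_mult_add_rdistrib scaleR_matrix_vector_assoc)
  finally have "r \<bullet> (transpose B *v d) = - s * (d \<bullet> (C *v v))"
    unfolding inner_transpose_mult by simp
  moreover have "transpose B *v (v + d) - y = r + transpose B *v d"
    by (simp only: r_def matrix_vector_right_distrib) simp
  ultimately show ?thesis
    using sym[of v d]
    by (simp del: transpose_matrix_vector add: r_def[symmetric] power2_norm_eq_inner algebra_simps
        inner_add_left inner_add_right inner_commute)
qed

definition tagged_borel_partition ::
    "'a::topological_space set \<Rightarrow> nat \<Rightarrow> (nat \<Rightarrow> 'a set) \<Rightarrow> (nat \<Rightarrow> 'a) \<Rightarrow> bool" where
  "tagged_borel_partition X J A z \<longleftrightarrow>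
     (\<forall>j<J. A j \<in> sets borel \<and> z j \<in> X) \<and> disjoint_family_on A {..<J} \<and> (\<Union>j<J. A j) = X"

lemma tagged_borel_partition_tag:
  "tagged_borel_partition X J A z \<Longrightarrow> j < J \<Longrightarrow> z j \<in> X"
  unfolding tagged_borel_partition_def by auto

lemma tagged_borel_partition_subset:
  "tagged_borel_partition X J A z \<Longrightarrow> j < J \<Longrightarrow> A j \<subseteq> X"
  unfolding tagged_borel_partition_def by auto

lemma compact_tagged_borel_partition:
  fixes X :: "'a::metric_space set"
  assumes "compact X" and "d > 0"
  obtains J A z where "tagged_borel_partition X J A z"
    and "\<And>j x. j < J \<Longrightarrow> x \<in> A j \<Longrightarrow> dist x (z j) < d"
proof -
  obtain C where "C \<subseteq> X" and "finite C" and cover: "X \<subseteq> (\<Union>c\<in>C. ball c d)"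
    using compactE_image[OF \<open>compact X\<close>, of X "\<lambda>c. ball c d"] \<open>d > 0\<close> by force
  then obtain zs where zs: "set zs = C"
    using finite_list by blast
  define J where "J = length zs"
  define z where "z j = zs ! j" for j
  define A where "A j = X \<inter> ball (z j) d - (\<Union>i<j. ball (z i) d)" for j
  \<comment> \<open>each point of X belongs to the first ball of the cover that contains it\<close>
  have "X \<subseteq> (\<Union>j<J. A j)"
  proof
    fix x assume "x \<in> X"
    then obtain i where i: "i < J" "x \<in> ball (z i) d"
      using cover zs unfolding z_def J_def by (metis UN_E in_set_conv_nth subsetD)
    define j where "j = (LEAST j. x \<in> ball (z j) d)"
    have "x \<in> ball (z j) d" and "j \<le> i" and "\<And>l. l < j \<Longrightarrow> x \<notin> ball (z l) d"
      unfolding j_def using i by (auto intro: LeastI Least_le dest: not_less_Least)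
    then show "x \<in> (\<Union>j<J. A j)"
      using \<open>x \<in> X\<close> i unfolding A_def by fastforce
  qed
  moreover have "disjoint_family_on A {..<J}"
    unfolding disjoint_family_on_def
  proof (intro ballI impI)
    fix i j :: nat assume "i \<noteq> j"
    then consider "i < j" | "j < i" by linarith
    then show "A i \<inter> A j = {}"
      unfolding A_def by cases auto
  qed
  moreover have "A j \<in> sets borel" for j
    using \<open>compact X\<close> unfolding A_def by (intro sets.Diff sets.Int) (auto simp: compact_imp_closed)
  moreover have "z j \<in> X" if "j < J" for j
    using that zs \<open>C \<subseteq> X\<close> nth_mem unfolding z_def J_def by blast
  ultimately have "tagged_borel_partition X J A z"
    unfolding tagged_borel_partition_def A_def by blast
  moreover have "dist x (z j) < d" if "x \<in> A j" for j x
    using that unfolding A_def by (simp add: dist_commute)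
  ultimately show ?thesis
    using that by blast
qed

locale finite_borel_measure = finite_measure M for M :: "'a::metric_space measure" +
  assumes sets_eq_borel: "sets M = sets borel"
begin

lemma integrable_indicator_mult_continuous:
  fixes h :: "'a \<Rightarrow> real"
  assumes "compact X" and "continuous_on X h"
  shows "integrable M (\<lambda>x. indicator X x * h x)"
proof -
  obtain B where "B > 0" and B: "\<forall>x\<in>X. \<bar>h x\<bar> \<le> B"
    using assms compact_continuous_image[THEN compact_imp_bounded] by (force simp: bounded_pos)
  have "X \<in> sets borel"
    using \<open>compact X\<close> by (simp add: compact_imp_closed)
  then have "(\<lambda>x. indicator X x * h x) \<in> borel_measurable M"
    using borel_measurable_continuous_on_indicator[OF _ \<open>continuous_on X h\<close>]
    by (simp add: measurable_cong_sets[OF sets_eq_borel refl])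
  moreover have "AE x in M. norm (indicator X x * h x) \<le> B"
    using B \<open>B > 0\<close> by (intro AE_I2) (simp add: indicator_def)
  ultimately show ?thesis
    by (intro integrable_const_bound[where B=B])
qed

lemma abs_integral_le_mult_measure:
  fixes f :: "'a \<Rightarrow> real"
  assumes "X \<in> sets M" and "integrable M f" and "\<And>x. \<bar>f x\<bar> \<le> e * indicator X x"
  shows "\<bar>\<integral>x. f x \<partial>M\<bar> \<le> e * measure M X"
proof -
  have "\<bar>\<integral>x. f x \<partial>M\<bar> \<le> (\<integral>x. \<bar>f x\<bar> \<partial>M)"
    using integral_norm_bound[of M f] by simp
  also have "\<dots> \<le> (\<integral>x. e * indicator X x \<partial>M)"
    using assms by (intro integral_mono) (auto simp: emeasure_finite less_top[symmetric])
  also have "\<dots> = e * measure M X"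
    using \<open>X \<in> sets M\<close> sets.sets_into_space by (simp add: Int_absorb2)
  finally show ?thesis .
qed

lemma integral_approx_by_partition:
  fixes h :: "'a \<Rightarrow> real"
  assumes "compact X" and "continuous_on X h"
    and P: "tagged_borel_partition X J A z"
    and osc: "\<forall>j<J. \<forall>x\<in>A j. \<bar>h x - h (z j)\<bar> \<le> e"
  shows "\<bar>(\<integral>x. indicator X x * h x \<partial>M) - (\<Sum>j<J. measure M (A j) * h (z j))\<bar> \<le> e * measure M X"
proof -
  have A: "\<And>j. j < J \<Longrightarrow> A j \<in> sets M"
    using P sets_eq_borel unfolding tagged_borel_partition_def by auto
  have ind: "indicator X x = (\<Sum>j<J. indicator (A j) x :: real)" for x
    using P indicator_UN_disjoint[of "{..<J}" A x] unfolding tagged_borel_partition_def by auto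
  have simple_integrable: "integrable M (\<lambda>x. \<Sum>j<J. indicator (A j) x * h (z j))"
    by (intro Bochner_Integration.integrable_sum integrable_mult_left integrable_real_indicator)
      (use A in \<open>auto simp: emeasure_finite less_top[symmetric]\<close>)
  have "(\<Sum>j<J. measure M (A j) * h (z j)) = (\<integral>x. (\<Sum>j<J. indicator (A j) x * h (z j)) \<partial>M)"
    using A by (subst Bochner_Integration.integral_sum) (auto intro!: integrable_real_indicator
      simp: emeasure_finite less_top[symmetric] Int_absorb2 sets.sets_into_space)
  then have diff: "(\<integral>x. indicator X x * h x \<partial>M) - (\<Sum>j<J. measure M (A j) * h (z j))
      = (\<integral>x. indicator X x * h x - (\<Sum>j<J. indicator (A j) x * h (z j)) \<partial>M)"
    using integrable_indicator_mult_continuous[OF assms(1,2)] simple_integrable by simp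
  have "\<bar>indicator X x * h x - (\<Sum>j<J. indicator (A j) x * h (z j))\<bar> \<le> e * indicator X x" for x
  proof -
    have "\<bar>indicator X x * h x - (\<Sum>j<J. indicator (A j) x * h (z j))\<bar>
        = \<bar>\<Sum>j<J. indicator (A j) x * (h x - h (z j))\<bar>"
      unfolding ind by (simp add: sum_distrib_right sum_subtractf right_diff_distrib)
    also have "\<dots> \<le> (\<Sum>j<J. indicator (A j) x * e)"
      using osc by (intro order_trans[OF sum_abs] sum_mono) (auto simp: indicator_def)
    finally show ?thesis
      unfolding ind by (simp add: sum_distrib_left mult.commute)
  qed
  moreover have "X \<in> sets M"
    using sets_eq_borel \<open>compact X\<close> by (simp add: compact_imp_closed)
  ultimately show ?thesis
    unfolding diff using integrable_indicator_mult_continuous[OF assms(1,2)] simple_integrable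
    by (intro abs_integral_le_mult_measure) auto
qed

lemma sum_measure_partition:
  assumes "tagged_borel_partition X J A z"
  shows "(\<Sum>j<J. measure M (A j)) = measure M X"
  using assms sets_eq_borel unfolding tagged_borel_partition_def
  by (metis finite_lessThan finite_measure_finite_Union image_subset_iff lessThan_iff)

end

definition total_mass :: "'a set \<Rightarrow> 'a smeasure \<Rightarrow> real" where
  "total_mass X \<nu> = measure (fst \<nu>) X + measure (snd \<nu>) X"

definition signed_mass :: "'a smeasure \<Rightarrow> 'a set \<Rightarrow> real" where
  "signed_mass \<nu> A = measure (fst \<nu>) A - measure (snd \<nu>) A"

lemma total_mass_nonneg: "0 \<le> total_mass X \<nu>"
  unfolding total_mass_def by simp

lemma signed_borel_on_finite_borel_measure:
  assumes "signed_borel_on X \<nu>"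
  shows "finite_borel_measure (fst \<nu>)" and "finite_borel_measure (snd \<nu>)"
  using assms unfolding signed_borel_on_def finite_borel_measure_def finite_borel_measure_axioms_def
  by auto

lemma sint_linear_comb:
  fixes h :: "'i \<Rightarrow> 'a::euclidean_space \<Rightarrow> real"
  assumes \<nu>: "signed_borel_on X \<nu>" and "compact X" and "\<And>i. i \<in> I \<Longrightarrow> continuous_on X (h i)"
  shows "sint \<nu> (\<lambda>x. indicator X x * (\<Sum>i\<in>I. c i * h i x))
       = (\<Sum>i\<in>I. c i * sint \<nu> (\<lambda>x. indicator X x * h i x))"
proof -
  have "(\<integral>x. indicator X x * (\<Sum>i\<in>I. c i * h i x) \<partial>M) = (\<Sum>i\<in>I. c i * (\<integral>x. indicator X x * h i x \<partial>M))"
    if "finite_borel_measure M" for M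
  proof -
    interpret finite_borel_measure M by fact
    have "(\<integral>x. indicator X x * (\<Sum>i\<in>I. c i * h i x) \<partial>M)
        = (\<integral>x. (\<Sum>i\<in>I. c i * (indicator X x * h i x)) \<partial>M)"
      by (simp add: sum_distrib_left ac_simps)
    also have "\<dots> = (\<Sum>i\<in>I. c i * (\<integral>x. indicator X x * h i x \<partial>M))"
      using assms(2,3) integrable_indicator_mult_continuous
      by (subst Bochner_Integration.integral_sum) auto
    finally show ?thesis .
  qed
  from this[OF signed_borel_on_finite_borel_measure(1)[OF \<nu>]]
    this[OF signed_borel_on_finite_borel_measure(2)[OF \<nu>]]
  show ?thesis
    unfolding sint_def by (simp add: sum_subtractf right_diff_distrib)
qed

lemma sint_diff:
  fixes h g :: "'a::euclidean_space \<Rightarrow> real"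
  assumes "signed_borel_on X \<nu>" and "compact X" and "continuous_on X h" and "continuous_on X g"
  shows "sint \<nu> (\<lambda>x. indicator X x * (h x - g x))
       = sint \<nu> (\<lambda>x. indicator X x * h x) - sint \<nu> (\<lambda>x. indicator X x * g x)"
  using sint_linear_comb[OF assms(1,2), of UNIV "\<lambda>b. if b then h else g" "\<lambda>b. if b then 1 else -1"]
    assms(3,4) by (simp add: UNIV_bool)

lemma abs_sint_le:
  fixes h :: "'a::euclidean_space \<Rightarrow> real"
  assumes \<nu>: "signed_borel_on X \<nu>" and "compact X" and "continuous_on X h"
    and B: "\<forall>x\<in>X. \<bar>h x\<bar> \<le> B"
  shows "\<bar>sint \<nu> (\<lambda>x. indicator X x * h x)\<bar> \<le> B * total_mass X \<nu>"
proof -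
  have "\<bar>\<integral>x. indicator X x * h x \<partial>M\<bar> \<le> B * measure M X" if "finite_borel_measure M" for M
  proof -
    interpret finite_borel_measure M by fact
    show ?thesis
      using assms(2,3) B sets_eq_borel
      by (intro abs_integral_le_mult_measure integrable_indicator_mult_continuous)
        (auto simp: compact_imp_closed indicator_def)
  qed
  from this[OF signed_borel_on_finite_borel_measure(1)[OF \<nu>]]
    this[OF signed_borel_on_finite_borel_measure(2)[OF \<nu>]]
  show ?thesis
    unfolding sint_def total_mass_def by (simp add: abs_le_iff algebra_simps)
qed

lemma sint_approx_by_partition:
  fixes h :: "'a::euclidean_space \<Rightarrow> real"
  assumes \<nu>: "signed_borel_on X \<nu>" and "compact X" and "continuous_on X h"
    and "tagged_borel_partition X J A z"
    and "\<forall>j<J. \<forall>x\<in>A j. \<bar>h x - h (z j)\<bar> \<le> e"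
  shows "\<bar>sint \<nu> (\<lambda>x. indicator X x * h x) - (\<Sum>j<J. signed_mass \<nu> (A j) * h (z j))\<bar>
       \<le> e * total_mass X \<nu>"
proof -
  have "(\<Sum>j<J. signed_mass \<nu> (A j) * h (z j))
      = (\<Sum>j<J. measure (fst \<nu>) (A j) * h (z j)) - (\<Sum>j<J. measure (snd \<nu>) (A j) * h (z j))"
    unfolding signed_mass_def by (simp add: sum_subtractf left_diff_distrib)
  with finite_borel_measure.integral_approx_by_partition[OF
        signed_borel_on_finite_borel_measure(1)[OF \<nu>] assms(2-5)]
      finite_borel_measure.integral_approx_by_partition[OF
        signed_borel_on_finite_borel_measure(2)[OF \<nu>] assms(2-5)]
  show ?thesis
    unfolding sint_def total_mass_def by (simp add: abs_le_iff algebra_simps)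
qed

lemma sum_abs_signed_mass_le:
  assumes \<nu>: "signed_borel_on X \<nu>" and P: "tagged_borel_partition X J A z"
  shows "(\<Sum>j<J. \<bar>signed_mass \<nu> (A j)\<bar>) \<le> total_mass X \<nu>"
proof -
  have "(\<Sum>j<J. \<bar>signed_mass \<nu> (A j)\<bar>) \<le> (\<Sum>j<J. measure (fst \<nu>) (A j) + measure (snd \<nu>) (A j))"
    unfolding signed_mass_def by (intro sum_mono) (simp add: abs_le_iff)
  also have "\<dots> = total_mass X \<nu>"
    unfolding total_mass_def sum.distrib
      finite_borel_measure.sum_measure_partition[OF signed_borel_on_finite_borel_measure(1)[OF \<nu>] P]
      finite_borel_measure.sum_measure_partition[OF signed_borel_on_finite_borel_measure(2)[OF \<nu>] P]
    ..
  finally show ?thesis .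
qed

lemma rkhs_norm_sq_ge:
  fixes z :: "nat \<Rightarrow> 'a" and c :: "nat \<Rightarrow> real" and n :: nat
  assumes "\<forall>i<n. z i \<in> X" and "(\<Sum>i<n. \<Sum>j<n. c i * c j * k (z i) (z j)) \<le> 1"
  shows "ereal ((\<Sum>i<n. c i * g (z i))\<^sup>2) \<le> rkhs_norm_sq X k g"
  unfolding rkhs_norm_sq_def by (rule Sup_upper) (use assms in blast)

lemma rkhs_norm_sq_nonneg: "0 \<le> rkhs_norm_sq X k g"
  using rkhs_norm_sq_ge[of 0 _ X "\<lambda>_. 0" k g] by (simp add: zero_ereal_def)

lemma rkhs_norm_sq_le:
  assumes "\<And>n (z :: nat \<Rightarrow> 'a) (c :: nat \<Rightarrow> real). \<forall>i<n. z i \<in> X \<Longrightarrow>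
      (\<Sum>i<n. \<Sum>j<n. c i * c j * k (z i) (z j)) \<le> 1 \<Longrightarrow>
      (\<Sum>i<n. c i * g (z i))\<^sup>2 \<le> q"
  shows "rkhs_norm_sq X k g \<le> ereal q"
  unfolding rkhs_norm_sq_def by (rule Sup_least) (use assms in auto)

locale covariance_kernel_on =
  fixes X :: "'a::euclidean_space set" and k :: "'a \<Rightarrow> 'a \<Rightarrow> real"
  assumes compact: "compact X" and cov_kernel: "cov_kernel X k"
begin

lemma kernel_sym: "x \<in> X \<Longrightarrow> t \<in> X \<Longrightarrow> k x t = k t x"
  using cov_kernel unfolding cov_kernel_def by auto

lemma kernel_psd:
  fixes z :: "nat \<Rightarrow> 'a" and c :: "nat \<Rightarrow> real" and n :: nat
  shows "\<forall>i<n. z i \<in> X \<Longrightarrow> 0 \<le> (\<Sum>i<n. \<Sum>j<n. c i * c j * k (z i) (z j))"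
  using cov_kernel unfolding cov_kernel_def by blast

lemma kernel_continuous: "continuous_on (X \<times> X) (\<lambda>(x, t). k x t)"
  using cov_kernel unfolding cov_kernel_def by auto

lemma continuous_on_kernel_right:
  assumes "x \<in> X"
  shows "continuous_on X (k x)"
proof -
  have "continuous_on X ((\<lambda>(x, t). k x t) \<circ> Pair x)"
    using assms by (intro continuous_on_compose continuous_on_subset[OF kernel_continuous])
      (auto intro!: continuous_intros)
  then show ?thesis
    by (simp add: o_def)
qed

lemma kernel_uniformly_close:
  assumes "e > 0"
  obtains d where "d > 0"
    and "\<And>x x' t. x \<in> X \<Longrightarrow> x' \<in> X \<Longrightarrow> t \<in> X \<Longrightarrow> dist x x' < d \<Longrightarrow> \<bar>k x t - k x' t\<bar> < e"
proof -
  obtain d where "d > 0" and d: "\<forall>p\<in>X \<times> X. \<forall>p'\<in>X \<times> X. dist p' p < d \<longrightarrow>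
      dist ((\<lambda>(x, t). k x t) p') ((\<lambda>(x, t). k x t) p) < e"
    using compact_uniformly_continuous[OF kernel_continuous compact_Times[OF compact compact]]
      \<open>e > 0\<close>
    unfolding uniformly_continuous_on_def by metis
  have "\<bar>k x t - k x' t\<bar> < e" if "x \<in> X" "x' \<in> X" "t \<in> X" "dist x x' < d" for x x' t
    using d[rule_format, of "(x', t)" "(x, t)"] that by (simp add: dist_Pair_Pair dist_real_def)
  with \<open>d > 0\<close> show ?thesis
    using that by blast
qed

lemma abs_cov_op_diff_le:
  assumes \<nu>: "signed_borel_on X \<nu>" and "x \<in> X" and "x' \<in> X"
    and "\<forall>t\<in>X. \<bar>k x t - k x' t\<bar> \<le> e"
  shows "\<bar>cov_op X k \<nu> x - cov_op X k \<nu> x'\<bar> \<le> e * total_mass X \<nu>"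
  using sint_diff[OF \<nu> compact, of "k x" "k x'"] abs_sint_le[OF \<nu> compact, of "\<lambda>t. k x t - k x' t"]
    assms(2-4) continuous_on_kernel_right by (simp add: cov_op_def continuous_on_diff)

lemma continuous_on_cov_op:
  assumes \<nu>: "signed_borel_on X \<nu>"
  shows "continuous_on X (cov_op X k \<nu>)"
  unfolding continuous_on_iff
proof (intro ballI allI impI)
  fix x and e :: real assume "x \<in> X" and "0 < e"
  define e' where "e' = e / (total_mass X \<nu> + 1)"
  have "e' > 0" and e'_bound: "e' * total_mass X \<nu> < e"
    using \<open>0 < e\<close> total_mass_nonneg[of X \<nu>] unfolding e'_def by (auto simp: field_simps)
  obtain d where "d > 0" and d: "\<And>x x' t. x \<in> X \<Longrightarrow> x' \<in> X \<Longrightarrow> t \<in> X \<Longrightarrow> dist x x' < d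
      \<Longrightarrow> \<bar>k x t - k x' t\<bar> < e'"
    using kernel_uniformly_close[OF \<open>e' > 0\<close>] by blast
  have "dist (cov_op X k \<nu> x') (cov_op X k \<nu> x) < e" if "x' \<in> X" "dist x' x < d" for x'
    using abs_cov_op_diff_le[OF \<nu> \<open>x' \<in> X\<close> \<open>x \<in> X\<close>, of e'] d[of x' x] that \<open>x \<in> X\<close> e'_bound
    by (fastforce simp: dist_real_def)
  with \<open>d > 0\<close> show "\<exists>d>0. \<forall>x'\<in>X. dist x' x < d \<longrightarrow> dist (cov_op X k \<nu> x') (cov_op X k \<nu> x) < e"
    by blast
qed

definition fine_partition :: "real \<Rightarrow> nat \<Rightarrow> (nat \<Rightarrow> 'a set) \<Rightarrow> (nat \<Rightarrow> 'a) \<Rightarrow> bool" where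
  "fine_partition e J A z \<longleftrightarrow> tagged_borel_partition X J A z \<and>
     (\<forall>j<J. \<forall>x\<in>A j. \<forall>t\<in>X. \<bar>k x t - k (z j) t\<bar> \<le> e)"

lemma fine_partition_tag: "fine_partition e J A z \<Longrightarrow> j < J \<Longrightarrow> z j \<in> X"
  unfolding fine_partition_def using tagged_borel_partition_tag by blast

lemma fine_partition_kernel_right:
  assumes "fine_partition e J A z" and "j < J" and "x \<in> A j" and "t \<in> X"
  shows "\<bar>k t x - k t (z j)\<bar> \<le> e"
  using assms kernel_sym tagged_borel_partition_subset tagged_borel_partition_tag
  unfolding fine_partition_def by (metis subsetD)

lemma fine_partition_exists:
  assumes "e > 0"
  obtains J A z where "fine_partition e J A z"
proof -
  obtain d where "d > 0" and d: "\<And>x x' t. x \<in> X \<Longrightarrow> x' \<in> X \<Longrightarrow> t \<in> X \<Longrightarrow> dist x x' < d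
      \<Longrightarrow> \<bar>k x t - k x' t\<bar> < e"
    using kernel_uniformly_close[OF \<open>e > 0\<close>] by blast
  obtain J A z where P: "tagged_borel_partition X J A z"
    and close: "\<And>j x. j < J \<Longrightarrow> x \<in> A j \<Longrightarrow> dist x (z j) < d"
    using compact_tagged_borel_partition[OF compact \<open>d > 0\<close>] by blast
  have "\<bar>k x t - k (z j) t\<bar> \<le> e" if "j < J" "x \<in> A j" "t \<in> X" for j x t
    using d[of x "z j" t] close[OF that(1,2)] that tagged_borel_partition_subset[OF P]
      tagged_borel_partition_tag[OF P] by fastforce
  with P show ?thesis
    using that unfolding fine_partition_def by blast
qed

lemma fine_partition_sequence:
  obtains J A z where "\<And>n. fine_partition (1 / real (Suc n)) (J n) (A n) (z n)"
proof -
  have "\<forall>n. \<exists>p. fine_partition (1 / real (Suc n)) (fst p) (fst (snd p)) (snd (snd p))"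
    using fine_partition_exists
    by (metis of_nat_0_less_iff split_pairs zero_less_Suc zero_less_divide_1_iff)
  then obtain p where
    "\<And>n. fine_partition (1 / real (Suc n)) (fst (p n)) (fst (snd (p n))) (snd (snd (p n)))"
    by metis
  then show ?thesis
    by (rule that[of "\<lambda>n. fst (p n)" "\<lambda>n. fst (snd (p n))" "\<lambda>n. snd (snd (p n))"])
qed

lemma rkhs_norm_sq_cauchy_schwarz:
  fixes z :: "nat \<Rightarrow> 'a" and c :: "nat \<Rightarrow> real" and n :: nat
  assumes r: "rkhs_norm_sq X k g = ereal r" and z: "\<forall>i<n. z i \<in> X"
  shows "(\<Sum>i<n. c i * g (z i))\<^sup>2 \<le> r * (\<Sum>i<n. \<Sum>j<n. c i * c j * k (z i) (z j))"
proof -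
  define S where "S = (\<Sum>i<n. c i * g (z i))"
  define D where "D = (\<Sum>i<n. \<Sum>j<n. c i * c j * k (z i) (z j))"
  have "0 \<le> D" and "0 \<le> r"
    using kernel_psd[OF z] rkhs_norm_sq_nonneg[of X k g] r unfolding D_def by auto
  \<comment> \<open>the rescaled coefficients t * c are admissible in the supremum as soon as t^2 * D <= 1\<close>
  have scaled: "(t * S)\<^sup>2 \<le> r" if "t\<^sup>2 * D \<le> 1" for t
  proof -
    have "ereal ((\<Sum>i<n. (t * c i) * g (z i))\<^sup>2) \<le> rkhs_norm_sq X k g"
      using that by (intro rkhs_norm_sq_ge[OF z])
        (simp add: D_def sum_distrib_left power2_eq_square ac_simps)
    then show ?thesis
      using r by (simp add: S_def sum_distrib_left ac_simps)
  qed
  have "S\<^sup>2 \<le> r * D"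
  proof (cases "D = 0")
    case True
    have "S = 0"
    proof (rule ccontr)
      assume "S \<noteq> 0"
      then have "(r + 1)\<^sup>2 \<le> r"
        using scaled[of "(r + 1) / S"] True by simp
      with \<open>0 \<le> r\<close> show False
        by (simp add: power2_eq_square algebra_simps) (smt (verit) mult_nonneg_nonneg)
    qed
    then show ?thesis
      using True by simp
  next
    case False
    with \<open>0 \<le> D\<close> have "D > 0" by simp
    then have "S\<^sup>2 / D \<le> r"
      using scaled[of "1 / sqrt D"] by (simp add: power_divide power_mult_distrib)
    with \<open>D > 0\<close> show ?thesis
      by (simp add: field_simps)
  qed
  then show ?thesis
    unfolding S_def D_def .
qed

end

locale kernel_features = covariance_kernel_on X k
  for X :: "'a::euclidean_space set" and k +
  fixes \<mu> :: "'m::finite \<Rightarrow> 'a smeasure"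
  assumes features: "\<And>m. signed_borel_on X (\<mu> m)"
begin

(* In the notation of the header: feature_fun v = f_v = C nu_v and feature_integral v h = int_X h dnu_v. *)

definition feature_fun :: "real^'m \<Rightarrow> 'a \<Rightarrow> real" where
  "feature_fun v x = (\<Sum>m\<in>UNIV. v $ m * cov_op X k (\<mu> m) x)"

definition feature_integral :: "real^'m \<Rightarrow> ('a \<Rightarrow> real) \<Rightarrow> real" where
  "feature_integral v h = (\<Sum>m\<in>UNIV. v $ m * sint (\<mu> m) (\<lambda>x. indicator X x * h x))"

definition feature_mass :: "real^'m \<Rightarrow> real" where
  "feature_mass v = (\<Sum>m\<in>UNIV. \<bar>v $ m\<bar> * total_mass X (\<mu> m))"

definition feature_weight :: "(nat \<Rightarrow> 'a set) \<Rightarrow> real^'m \<Rightarrow> nat \<Rightarrow> real" where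
  "feature_weight A v j = (\<Sum>m\<in>UNIV. v $ m * signed_mass (\<mu> m) (A j))"

lemma feature_mass_nonneg: "0 \<le> feature_mass v"
  unfolding feature_mass_def by (intro sum_nonneg mult_nonneg_nonneg total_mass_nonneg) simp

lemma continuous_on_feature_fun: "continuous_on X (feature_fun v)"
  unfolding feature_fun_def[abs_def]
  by (intro continuous_on_sum continuous_on_mult continuous_on_const continuous_on_cov_op features)

lemma feature_fun_eq_feature_integral: "feature_fun v x = feature_integral v (k x)"
  unfolding feature_fun_def feature_integral_def cov_op_def ..

lemma feature_fun_add: "feature_fun (u + v) x = feature_fun u x + feature_fun v x"
  unfolding feature_fun_def by (simp add: sum.distrib distrib_right)

lemma feature_integral_approx:
  assumes P: "tagged_borel_partition X J A z" and "continuous_on X h"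
    and "\<forall>j<J. \<forall>x\<in>A j. \<bar>h x - h (z j)\<bar> \<le> e"
  shows "\<bar>feature_integral v h - (\<Sum>j<J. feature_weight A v j * h (z j))\<bar> \<le> e * feature_mass v"
proof -
  have "feature_integral v h - (\<Sum>j<J. feature_weight A v j * h (z j))
      = (\<Sum>m\<in>UNIV. v $ m * (sint (\<mu> m) (\<lambda>x. indicator X x * h x)
                              - (\<Sum>j<J. signed_mass (\<mu> m) (A j) * h (z j))))"
    unfolding feature_integral_def feature_weight_def
    by (simp add: sum_subtractf right_diff_distrib sum_distrib_left sum_distrib_right
        sum.swap[of _ "{..<J}"] ac_simps)
  also have "\<bar>\<dots>\<bar> \<le> (\<Sum>m\<in>UNIV. \<bar>v $ m\<bar> * (e * total_mass X (\<mu> m)))"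
    using sint_approx_by_partition[OF features compact assms(2) P assms(3)]
    by (intro order_trans[OF sum_abs] sum_mono) (simp add: abs_mult mult_left_mono)
  finally show ?thesis
    by (simp add: feature_mass_def sum_distrib_left ac_simps)
qed

lemma sum_abs_feature_weight_le:
  assumes "tagged_borel_partition X J A z"
  shows "(\<Sum>j<J. \<bar>feature_weight A v j\<bar>) \<le> feature_mass v"
proof -
  have "(\<Sum>j<J. \<bar>feature_weight A v j\<bar>) \<le> (\<Sum>j<J. \<Sum>m\<in>UNIV. \<bar>v $ m\<bar> * \<bar>signed_mass (\<mu> m) (A j)\<bar>)"
    unfolding feature_weight_def by (intro sum_mono order_trans[OF sum_abs]) (simp add: abs_mult)
  also have "\<dots> = (\<Sum>m\<in>UNIV. \<bar>v $ m\<bar> * (\<Sum>j<J. \<bar>signed_mass (\<mu> m) (A j)\<bar>))"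
    by (simp add: sum_distrib_left sum.swap[of _ "{..<J}"])
  also have "\<dots> \<le> feature_mass v"
    unfolding feature_mass_def
    by (intro sum_mono mult_left_mono sum_abs_signed_mass_le[OF features assms]) simp
  finally show ?thesis .
qed

lemma feature_fun_oscillation:
  assumes F: "fine_partition e J A z" and "j < J" and "x \<in> A j"
  shows "\<bar>feature_fun v x - feature_fun v (z j)\<bar> \<le> e * feature_mass v"
proof -
  have P: "tagged_borel_partition X J A z"
    using F unfolding fine_partition_def by blast
  have "x \<in> X" and "z j \<in> X"
    using tagged_borel_partition_subset[OF P] tagged_borel_partition_tag[OF P] assms(2,3) by auto
  moreover have "\<forall>t\<in>X. \<bar>k x t - k (z j) t\<bar> \<le> e"
    using F assms(2,3) unfolding fine_partition_def by blast
  ultimately have "\<bar>cov_op X k (\<mu> m) x - cov_op X k (\<mu> m) (z j)\<bar> \<le> e * total_mass X (\<mu> m)" for m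
    by (rule abs_cov_op_diff_le[OF features])
  then have "\<bar>\<Sum>m\<in>UNIV. v $ m * (cov_op X k (\<mu> m) x - cov_op X k (\<mu> m) (z j))\<bar>
      \<le> (\<Sum>m\<in>UNIV. \<bar>v $ m\<bar> * (e * total_mass X (\<mu> m)))"
    by (intro order_trans[OF sum_abs] sum_mono) (simp add: abs_mult mult_left_mono)
  then show ?thesis
    by (simp add: feature_fun_def feature_mass_def sum_subtractf right_diff_distrib
        sum_distrib_left ac_simps)
qed

lemma feature_fun_approx:
  assumes F: "fine_partition e J A z" and "x \<in> X"
  shows "\<bar>feature_fun v x - (\<Sum>l<J. feature_weight A v l * k x (z l))\<bar> \<le> e * feature_mass v"
  unfolding feature_fun_eq_feature_integral
  using F fine_partition_kernel_right[OF F _ _ \<open>x \<in> X\<close>] continuous_on_kernel_right[OF \<open>x \<in> X\<close>]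
  by (intro feature_integral_approx) (auto simp: fine_partition_def)

lemma feature_integral_feature_fun_approx:
  assumes F: "fine_partition e J A z" and "0 \<le> e"
  shows "\<bar>feature_integral u (feature_fun v)
           - (\<Sum>j<J. \<Sum>l<J. feature_weight A u j * feature_weight A v l * k (z j) (z l))\<bar>
         \<le> e * (2 * feature_mass u * feature_mass v)"
proof -
  have P: "tagged_borel_partition X J A z"
    using F unfolding fine_partition_def by blast
  have riemann: "\<bar>feature_integral u (feature_fun v)
      - (\<Sum>j<J. feature_weight A u j * feature_fun v (z j))\<bar>
      \<le> e * feature_mass v * feature_mass u"
    using feature_fun_oscillation[OF F] continuous_on_feature_fun
    by (intro feature_integral_approx[OF P]) auto
  have "\<bar>(\<Sum>j<J. feature_weight A u j * feature_fun v (z j))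
          - (\<Sum>j<J. \<Sum>l<J. feature_weight A u j * feature_weight A v l * k (z j) (z l))\<bar>
      = \<bar>\<Sum>j<J. feature_weight A u j
               * (feature_fun v (z j) - (\<Sum>l<J. feature_weight A v l * k (z j) (z l)))\<bar>"
    by (simp add: sum_subtractf right_diff_distrib sum_distrib_left ac_simps)
  also have "\<dots> \<le> (\<Sum>j<J. \<bar>feature_weight A u j\<bar> * (e * feature_mass v))"
    using feature_fun_approx[OF F] tagged_borel_partition_tag[OF P]
    by (intro order_trans[OF sum_abs] sum_mono) (simp add: abs_mult mult_left_mono)
  also have "\<dots> \<le> feature_mass u * (e * feature_mass v)"
    unfolding sum_distrib_right[symmetric]
    using \<open>0 \<le> e\<close> feature_mass_nonneg
    by (intro mult_right_mono sum_abs_feature_weight_le[OF P]) simp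
  finally show ?thesis
    using riemann by (simp add: abs_le_iff algebra_simps)
qed

lemma LIMSEQ_feature_riemann_sum:
  assumes fine: "\<And>n. fine_partition (1 / real (Suc n)) (J n) (A n) (z n)"
  shows "(\<lambda>n. \<Sum>j<J n. feature_weight (A n) v j * feature_fun u (z n j))
           \<longlonglongrightarrow> feature_integral v (feature_fun u)"
proof (rule LIMSEQ_of_abs_diff_le)
  fix n
  have "\<bar>feature_integral v (feature_fun u)
      - (\<Sum>j<J n. feature_weight (A n) v j * feature_fun u (z n j))\<bar>
      \<le> 1 / real (Suc n) * feature_mass u * feature_mass v"
    using fine feature_fun_oscillation[OF fine] continuous_on_feature_fun
    by (intro feature_integral_approx) (auto simp: fine_partition_def)
  then show "\<bar>(\<Sum>j<J n. feature_weight (A n) v j * feature_fun u (z n j))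
      - feature_integral v (feature_fun u)\<bar>
      \<le> feature_mass u * feature_mass v / real (Suc n)"
    by (simp add: abs_minus_commute)
qed

lemma LIMSEQ_feature_kernel_expansion:
  assumes fine: "\<And>n. fine_partition (1 / real (Suc n)) (J n) (A n) (z n)" and "x \<in> X"
  shows "(\<lambda>n. \<Sum>l<J n. feature_weight (A n) v l * k x (z n l)) \<longlonglongrightarrow> feature_fun v x"
  using feature_fun_approx[OF fine \<open>x \<in> X\<close>]
  by (intro LIMSEQ_of_abs_diff_le[of _ _ "feature_mass v"]) (simp add: abs_minus_commute)

lemma LIMSEQ_feature_gram_sum:
  assumes fine: "\<And>n. fine_partition (1 / real (Suc n)) (J n) (A n) (z n)"
  shows "(\<lambda>n. \<Sum>j<J n. \<Sum>l<J n.
             feature_weight (A n) u j * feature_weight (A n) v l * k (z n j) (z n l))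
           \<longlonglongrightarrow> feature_integral u (feature_fun v)"
  using feature_integral_feature_fun_approx[OF fine]
  by (intro LIMSEQ_of_abs_diff_le[of _ _ "2 * feature_mass u * feature_mass v"])
    (simp add: abs_minus_commute)

lemma feature_integral_sym:
  "feature_integral u (feature_fun v) = feature_integral v (feature_fun u)"
proof -
  obtain J A z where fine: "\<And>n. fine_partition (1 / real (Suc n)) (J n) (A n) (z n)"
    using fine_partition_sequence by blast
  have "(\<Sum>j<J n. \<Sum>l<J n. feature_weight (A n) u j * feature_weight (A n) v l * k (z n j) (z n l))
      = (\<Sum>j<J n. \<Sum>l<J n. feature_weight (A n) v j * feature_weight (A n) u l * k (z n j) (z n l))"
    for n
    using kernel_sym[OF fine_partition_tag[OF fine] fine_partition_tag[OF fine]]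
    by (subst sum.swap) (intro sum.cong refl; simp add: ac_simps)
  then have "(\<lambda>n. \<Sum>j<J n. \<Sum>l<J n.
        feature_weight (A n) u j * feature_weight (A n) v l * k (z n j) (z n l))
      \<longlonglongrightarrow> feature_integral v (feature_fun u)"
    using LIMSEQ_feature_gram_sum[OF fine, of v u] by simp
  then show ?thesis
    using LIMSEQ_feature_gram_sum[OF fine, of u v] LIMSEQ_unique by blast
qed

lemma feature_integral_psd:
  fixes p :: "nat \<Rightarrow> 'a" and c :: "nat \<Rightarrow> real" and n :: nat
  assumes p: "\<forall>i<n. p i \<in> X"
  shows "0 \<le> feature_integral v (feature_fun v) + 2 * (\<Sum>i<n. c i * feature_fun v (p i))
              + (\<Sum>i<n. \<Sum>j<n. c i * c j * k (p i) (p j))"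
proof -
  obtain J A z where fine: "\<And>N. fine_partition (1 / real (Suc N)) (J N) (A N) (z N)"
    using fine_partition_sequence by blast
  define P where "P = (\<Sum>i<n. \<Sum>j<n. c i * c j * k (p i) (p j))"
  define Q where "Q N = (\<Sum>i<n. c i * (\<Sum>l<J N. feature_weight (A N) v l * k (p i) (z N l)))" for N
  define R where "R N = (\<Sum>j<J N. \<Sum>l<J N.
      feature_weight (A N) v j * feature_weight (A N) v l * k (z N j) (z N l))" for N
  \<comment> \<open>positive semidefiniteness of k on the points p i together with the tags of the N-th partition\<close>
  have "0 \<le> P + 2 * Q N + R N" for N
  proof -
    define C where "C i = (if i < n then c i else feature_weight (A N) v (i - n))" for i
    define Z where "Z i = (if i < n then p i else z N (i - n))" for i
    have tags: "\<And>l. l < J N \<Longrightarrow> z N l \<in> X"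
      using fine_partition_tag[OF fine] .
    have cross: "(\<Sum>l<J N. \<Sum>i<n. feature_weight (A N) v l * c i * k (z N l) (p i)) = Q N"
      unfolding Q_def sum_distrib_left
      using kernel_sym[OF p[rule_format] tags]
      by (subst sum.swap) (intro sum.cong refl; simp add: ac_simps)
    have "0 \<le> (\<Sum>i<n + J N. \<Sum>j<n + J N. C i * C j * k (Z i) (Z j))"
      using p tags by (intro kernel_psd) (simp add: Z_def)
    also have "\<dots> = P + 2 * Q N + R N"
      using cross unfolding sum_lessThan_add C_def Z_def P_def R_def Q_def
      by (simp add: sum.distrib sum_distrib_left ac_simps)
    finally show ?thesis .
  qed
  moreover have "(\<lambda>N. P + 2 * Q N + R N) \<longlonglongrightarrow>
      P + 2 * (\<Sum>i<n. c i * feature_fun v (p i)) + feature_integral v (feature_fun v)"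
    unfolding Q_def R_def using p
    by (intro tendsto_intros LIMSEQ_feature_kernel_expansion[OF fine]
        LIMSEQ_feature_gram_sum[OF fine]) auto
  ultimately show ?thesis
    unfolding P_def by (intro LIMSEQ_le_const[where a=0]) (auto simp: ac_simps)
qed

lemma feature_integral_nonneg: "0 \<le> feature_integral v (feature_fun v)"
  using feature_integral_psd[of 0] by simp

lemma rkhs_norm_sq_feature_fun_le:
  "rkhs_norm_sq X k (feature_fun v) \<le> ereal (feature_integral v (feature_fun v))"
proof (rule rkhs_norm_sq_le)
  fix n and p :: "nat \<Rightarrow> 'a" and c :: "nat \<Rightarrow> real"
  assume p: "\<forall>i<n. p i \<in> X" and normalised: "(\<Sum>i<n. \<Sum>j<n. c i * c j * k (p i) (p j)) \<le> 1"
  define q where "q = feature_integral v (feature_fun v)"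
  define S where "S = (\<Sum>i<n. c i * feature_fun v (p i))"
  define D where "D = (\<Sum>i<n. \<Sum>j<n. c i * c j * k (p i) (p j))"
  have "0 \<le> q + 2 * t * S + t\<^sup>2 * D" for t
    using feature_integral_psd[OF p, of v "\<lambda>i. t * c i"]
    by (simp add: q_def S_def D_def sum_distrib_left power2_eq_square ac_simps)
  then have "S\<^sup>2 \<le> q * D"
    using kernel_psd[OF p] by (intro square_le_of_quadratic_nonneg) (simp_all add: D_def)
  also have "\<dots> \<le> q"
    using normalised feature_integral_nonneg[of v] mult_left_le[of D q]
    by (simp add: q_def D_def)
  finally show "(\<Sum>i<n. c i * feature_fun v (p i))\<^sup>2 \<le> feature_integral v (feature_fun v)"
    by (simp add: S_def q_def)
qed

lemma feature_integral_le_rkhs_norm_sq: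
  assumes r: "rkhs_norm_sq X k (feature_fun v) = ereal r"
  shows "feature_integral v (feature_fun v) \<le> r"
proof -
  obtain J A z where fine: "\<And>n. fine_partition (1 / real (Suc n)) (J n) (A n) (z n)"
    using fine_partition_sequence by blast
  define q where "q = feature_integral v (feature_fun v)"
  define S where "S n = (\<Sum>j<J n. feature_weight (A n) v j * feature_fun v (z n j))" for n
  define D where "D n = (\<Sum>j<J n. \<Sum>l<J n.
      feature_weight (A n) v j * feature_weight (A n) v l * k (z n j) (z n l))" for n
  have "(S n)\<^sup>2 \<le> r * D n" for n
    unfolding S_def D_def
    using fine_partition_tag[OF fine] by (intro rkhs_norm_sq_cauchy_schwarz[OF r]) blast
  moreover have "(\<lambda>n. (S n)\<^sup>2) \<longlonglongrightarrow> q\<^sup>2" and "(\<lambda>n. r * D n) \<longlonglongrightarrow> r * q"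
    unfolding S_def D_def q_def
    by (intro tendsto_intros LIMSEQ_feature_riemann_sum[OF fine] LIMSEQ_feature_gram_sum[OF fine])+
  ultimately have "q\<^sup>2 \<le> r * q"
    by (intro LIMSEQ_le) auto
  moreover have "0 \<le> q" and "0 \<le> r"
    using feature_integral_nonneg rkhs_norm_sq_nonneg[of X k "feature_fun v"] r
    by (auto simp: q_def)
  ultimately show ?thesis
    unfolding q_def[symmetric] by (cases "q = 0") (auto simp: power2_eq_square)
qed

lemma rkhs_norm_sq_feature_fun:
  "rkhs_norm_sq X k (feature_fun v) = ereal (feature_integral v (feature_fun v))"
proof -
  obtain r where r: "rkhs_norm_sq X k (feature_fun v) = ereal r"
    using rkhs_norm_sq_feature_fun_le[of v] rkhs_norm_sq_nonneg[of X k "feature_fun v"]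
    by (cases "rkhs_norm_sq X k (feature_fun v)") auto
  with rkhs_norm_sq_feature_fun_le[of v] feature_integral_le_rkhs_norm_sq[OF r] show ?thesis
    by simp
qed

lemma feature_fun_eq_zero:
  assumes "feature_integral v (feature_fun v) = 0" and "x \<in> X"
  shows "feature_fun v x = 0"
proof -
  have "rkhs_norm_sq X k (feature_fun v) = ereal 0"
    using assms(1) by (simp add: rkhs_norm_sq_feature_fun)
  from rkhs_norm_sq_cauchy_schwarz[OF this, of 1 "\<lambda>_. x" "\<lambda>_. 1"] \<open>x \<in> X\<close>
  show ?thesis
    by simp
qed

lemma C_LL_mult_nth: "(C_LL X k \<mu> *v v) $ m = sint (\<mu> m) (\<lambda>x. indicator X x * feature_fun v x)"
proof -
  have "sint (\<mu> m) (\<lambda>x. indicator X x * feature_fun v x)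
      = (\<Sum>j\<in>UNIV. v $ j * sint (\<mu> m) (\<lambda>x. indicator X x * cov_op X k (\<mu> j) x))"
    unfolding feature_fun_def
    by (rule sint_linear_comb[OF features compact continuous_on_cov_op[OF features]])
  then show ?thesis
    by (simp add: matrix_vector_mult_def C_LL_def ac_simps)
qed

lemma inner_C_LL: "u \<bullet> (C_LL X k \<mu> *v v) = feature_integral u (feature_fun v)"
  unfolding inner_vec_def C_LL_mult_nth feature_integral_def by simp

lemma C_LL_sym: "u \<bullet> (C_LL X k \<mu> *v v) = v \<bullet> (C_LL X k \<mu> *v u)"
  unfolding inner_C_LL by (rule feature_integral_sym)

lemma C_LL_psd: "0 \<le> v \<bullet> (C_LL X k \<mu> *v v)"
  unfolding inner_C_LL by (rule feature_integral_nonneg)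

lemma transpose_C_LD_mult_nth:
  assumes "xs n \<in> X"
  shows "(transpose (C_LD X k \<mu> xs) *v v) $ n = feature_fun v (xs n)"
proof -
  have "(\<lambda>x. indicator X x * k x (xs n)) = (\<lambda>x. indicator X x * k (xs n) x)"
    using kernel_sym[OF _ assms] by (auto simp: indicator_def)
  then show ?thesis
    unfolding matrix_vector_mult_def transpose_def C_LD_def feature_fun_def cov_op_def
    by (simp add: ac_simps)
qed

lemma C_xL_inner: "C_xL X k \<mu> x \<bullet> v = feature_fun v x"
  unfolding inner_vec_def C_xL_def feature_fun_def by (simp add: ac_simps)

lemma nystrom_space_eq_range: "nystrom_space X k \<mu> = range feature_fun"
proof (intro equalityI subsetI)
  fix g assume "g \<in> nystrom_space X k \<mu>"
  then obtain a where "g = (\<lambda>x. \<Sum>m\<in>UNIV. a m * cov_op X k (\<mu> m) x)"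
    unfolding nystrom_space_def by blast
  then have "g = feature_fun (vec_lambda a)"
    by (simp add: feature_fun_def[abs_def])
  then show "g \<in> range feature_fun"
    by blast
next
  fix g assume "g \<in> range feature_fun"
  then show "g \<in> nystrom_space X k \<mu>"
    unfolding nystrom_space_def feature_fun_def[abs_def] by blast
qed

lemma krr_objective_feature_fun:
  fixes xs :: "'n::finite \<Rightarrow> 'a"
  assumes "\<forall>n. xs n \<in> X"
  shows "krr_objective X k xs y lam (feature_fun v)
       = ereal ((norm (transpose (C_LD X k \<mu> xs) *v v - y))\<^sup>2 / CARD('n)
                + lam * (v \<bullet> (C_LL X k \<mu> *v v)))"
proof -
  have "(norm (transpose (C_LD X k \<mu> xs) *v v - y))\<^sup>2 = (\<Sum>n\<in>UNIV. (feature_fun v (xs n) - y $ n)\<^sup>2)"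
    unfolding power2_norm_eq_inner inner_vec_def
    using assms by (simp del: transpose_matrix_vector add: transpose_C_LD_mult_nth power2_eq_square)
  then show ?thesis
    by (simp add: krr_objective_def rkhs_norm_sq_feature_fun inner_C_LL)
qed

lemma mean_Qstar_eq_feature_fun:
  assumes "invertible (C_LL X k \<mu>)" and "\<sigma>2 > 0"
  obtains v where "mean_Qstar X k \<mu> xs y \<sigma>2 = feature_fun v"
    and "(\<sigma>2 *\<^sub>R C_LL X k \<mu> + C_LD X k \<mu> xs ** transpose (C_LD X k \<mu> xs)) *v v = C_LD X k \<mu> xs *v y"
proof
  let ?G = "\<sigma>2 *\<^sub>R C_LL X k \<mu> + C_LD X k \<mu> xs ** transpose (C_LD X k \<mu> xs)"
  define v where "v = matrix_inv ?G *v (C_LD X k \<mu> xs *v y)"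
  show "mean_Qstar X k \<mu> xs y \<sigma>2 = feature_fun v"
    by (rule ext) (simp only: mean_Qstar_def C_xL_inner v_def)
  have "invertible ?G"
    using invertible_psd_add_gram[OF assms(1) C_LL_sym C_LL_psd assms(2)] .
  then show "?G *v v = C_LD X k \<mu> xs *v y"
    unfolding v_def matrix_vector_mul_assoc matrix_mul_assoc matrix_inv_right[OF \<open>invertible ?G\<close>]
      matrix_mul_lid by simp
qed

lemma krr_objective_feature_fun_add:
  fixes xs :: "'n::finite \<Rightarrow> 'a"
  assumes xs: "\<forall>n. xs n \<in> X"
    and normal: "((real CARD('n) * lam) *\<^sub>R C_LL X k \<mu> + C_LD X k \<mu> xs ** transpose (C_LD X k \<mu> xs))
      *v v = C_LD X k \<mu> xs *v y"
  shows "krr_objective X k xs y lam (feature_fun (v + d))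
       = krr_objective X k xs y lam (feature_fun v)
         + ereal ((norm (transpose (C_LD X k \<mu> xs) *v d))\<^sup>2 / CARD('n)
                  + lam * (d \<bullet> (C_LL X k \<mu> *v d)))"
proof -
  have "(norm (transpose (C_LD X k \<mu> xs) *v (v + d) - y))\<^sup>2 / CARD('n)
        + lam * ((v + d) \<bullet> (C_LL X k \<mu> *v (v + d)))
      = (norm (transpose (C_LD X k \<mu> xs) *v v - y))\<^sup>2 / CARD('n) + lam * (v \<bullet> (C_LL X k \<mu> *v v))
        + ((norm (transpose (C_LD X k \<mu> xs) *v d))\<^sup>2 / CARD('n) + lam * (d \<bullet> (C_LL X k \<mu> *v d)))"
    using quadratic_objective_expansion[OF C_LL_sym normal, of d] by (simp add: field_simps)
  then show ?thesis
    by (simp add: krr_objective_feature_fun[OF xs])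
qed

lemma krr_argmin_of_normal_equations:
  fixes xs :: "'n::finite \<Rightarrow> 'a"
  assumes xs: "\<forall>n. xs n \<in> X" and "lam > 0"
    and normal: "((real CARD('n) * lam) *\<^sub>R C_LL X k \<mu> + C_LD X k \<mu> xs ** transpose (C_LD X k \<mu> xs))
      *v v = C_LD X k \<mu> xs *v y"
  shows "is_argmin_on (krr_objective X k xs y lam) (nystrom_space X k \<mu>) (feature_fun v)"
    and "is_argmin_on (krr_objective X k xs y lam) (nystrom_space X k \<mu>) f \<Longrightarrow> x \<in> X
      \<Longrightarrow> f x = feature_fun v x"
proof -
  let ?J = "krr_objective X k xs y lam"
  define excess where "excess d = (norm (transpose (C_LD X k \<mu> xs) *v d))\<^sup>2 / CARD('n)
      + lam * (d \<bullet> (C_LL X k \<mu> *v d))" for d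
  have gap: "?J (feature_fun (v + d)) = ?J (feature_fun v) + ereal (excess d)" for d
    unfolding excess_def by (rule krr_objective_feature_fun_add[OF xs normal])
  obtain c where c: "?J (feature_fun v) = ereal c"
    using krr_objective_feature_fun[OF xs] by blast
  have shift: "\<exists>d. g = feature_fun (v + d)" if "g \<in> nystrom_space X k \<mu>" for g
    using that unfolding nystrom_space_eq_range by (auto intro: exI[of _ "_ - v"])
  have minimiser: "is_argmin_on ?J (nystrom_space X k \<mu>) (feature_fun v)"
    unfolding is_argmin_on_def
  proof (intro conjI ballI)
    show "feature_fun v \<in> nystrom_space X k \<mu>"
      unfolding nystrom_space_eq_range by simp
    fix g assume "g \<in> nystrom_space X k \<mu>"
    then obtain d where "g = feature_fun (v + d)"
      using shift by blast
    moreover have "0 \<le> excess d"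
      using C_LL_psd[of d] \<open>lam > 0\<close> by (simp add: excess_def)
    ultimately show "?J (feature_fun v) \<le> ?J g"
      by (simp add: gap c)
  qed
  then show "is_argmin_on ?J (nystrom_space X k \<mu>) (feature_fun v)" .
  assume f: "is_argmin_on ?J (nystrom_space X k \<mu>) f" and "x \<in> X"
  then obtain d where fd: "f = feature_fun (v + d)"
    using shift unfolding is_argmin_on_def by blast
  with f minimiser have "excess d \<le> 0"
    unfolding is_argmin_on_def by (fastforce simp: gap c)
  moreover have "0 \<le> (norm (transpose (C_LD X k \<mu> xs) *v d))\<^sup>2 / CARD('n)"
    and "0 \<le> lam * (d \<bullet> (C_LL X k \<mu> *v d))"
    using C_LL_psd[of d] \<open>lam > 0\<close> by simp_all
  ultimately have "lam * (d \<bullet> (C_LL X k \<mu> *v d)) = 0"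
    unfolding excess_def by linarith
  then show "f x = feature_fun v x"
    using feature_fun_eq_zero[OF _ \<open>x \<in> X\<close>] \<open>lam > 0\<close> by (simp add: fd feature_fun_add inner_C_LL)
qed

end

theorem theorem1:
  fixes X :: "'a::euclidean_space set"
    and k :: "'a \<Rightarrow> 'a \<Rightarrow> real"
    and \<mu> :: "'m::finite \<Rightarrow> 'a smeasure"
    and xs :: "'n::finite \<Rightarrow> 'a"
    and y :: "real^'n"
    and \<sigma>2 lam :: real
  assumes "compact X"
    and "cov_kernel X k"
    and "\<forall>m. signed_borel_on X (\<mu> m)"
    and "\<forall>n. xs n \<in> X"
    and "invertible (C_LL X k \<mu>)"
    and "lam > 0"
    and "\<sigma>2 = real CARD('n) * lam"
  shows "is_argmin_on (krr_objective X k xs y lam) (nystrom_space X k \<mu>) (mean_Qstar X k \<mu> xs y \<sigma>2)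
     \<and> (\<forall>f. is_argmin_on (krr_objective X k xs y lam) (nystrom_space X k \<mu>) f
            \<longrightarrow> (\<forall>x\<in>X. f x = mean_Qstar X k \<mu> xs y \<sigma>2 x))"
proof -
  interpret kernel_features X k \<mu>
    using assms(1-3) by unfold_locales auto
  have "\<sigma>2 > 0"
    using assms(6,7) by simp
  then obtain v where mean: "mean_Qstar X k \<mu> xs y \<sigma>2 = feature_fun v"
    and normal: "(\<sigma>2 *\<^sub>R C_LL X k \<mu> + C_LD X k \<mu> xs ** transpose (C_LD X k \<mu> xs)) *v v
      = C_LD X k \<mu> xs *v y"
    using mean_Qstar_eq_feature_fun[OF assms(5)] by blast
  show ?thesis
    using krr_argmin_of_normal_equations[OF assms(4,6) normal[unfolded assms(7)]]
    unfolding mean by blast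
qed

end
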